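(* Let $V_1,V_2$ be closed subspaces of a Hilbert space $\mathcal H$, neither of which contains the other, and let $\varepsilon=\cos\angle(V_1,V_2)<1$. Let $M=\begin{pmatrix}1&-\varepsilon\\-\varepsilon&1\end{pmatrix}$. For $w\in\mathcal H$ let $d_0(w),d_1(w),d_2(w)$ be the distances from $w$ to $V_1\cap V_2$, $V_1$, $V_2$, and let $w_1=P_{V_1}(w)$, $w_2=P_{V_2}(w)$, $w_{12}=P_{\overline{V_1+V_2}}(w)$. Then for every $w\in\mathcal H$: (a) $d_0(w)^2\le\begin{pmatrix}d_1(w)&d_2(w)\end{pmatrix}M^{-1}\begin{pmatrix}d_1(w)\\d_2(w)\end{pmatrix}$; (b) $\|w_{12}\|^2\le\begin{pmatrix}\|w_1\|&\|w_2\|\end{pmatrix}M^{-1}\begin{pmatrix}\|w_1\|\\\|w_2\|\end{pmatrix}$.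
   Context: $P_V$ denotes orthogonal projection onto a closed subspace $V$; $\overline{V_1+V_2}$ is the closure of $V_1+V_2$. For closed subspaces $V_1,V_2$ neither of which contains the other, the (Friederichs) angle $\angle(V_1,V_2)\in[0,\pi/2]$ is defined by $\cos\angle(V_1,V_2)=\sup\{|\langle v_1,v_2\rangle| : v_i\in V_i,\ \|v_i\|=1,\ v_i\perp V_1\cap V_2\}$. *)

theory Defs
  imports "HOL-Analysis.Analysis"
begin

definition closed_subspace :: "'a::real_inner set \<Rightarrow> bool" where
  "closed_subspace V \<longleftrightarrow> subspace V \<and> closed V"

definition orth_proj :: "'a::real_inner set \<Rightarrow> 'a \<Rightarrow> 'a" where
  "orth_proj V w = (THE v. v \<in> V \<and> (\<forall>u\<in>V. inner (w - v) u = 0))"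

definition cos_angle :: "'a::real_inner set \<Rightarrow> 'a set \<Rightarrow> real" where
  "cos_angle V1 V2 = Sup {\<bar>inner v1 v2\<bar> | v1 v2.
      v1 \<in> V1 \<and> v2 \<in> V2 \<and> norm v1 = 1 \<and> norm v2 = 1 \<and>
      (\<forall>u\<in>V1 \<inter> V2. inner v1 u = 0) \<and> (\<forall>u\<in>V1 \<inter> V2. inner v2 u = 0)}"

definition Mmat :: "real \<Rightarrow> real^2^2" where
  "Mmat e = vector [vector [1, - e], vector [- e, 1]]"

definition qform_inv :: "real \<Rightarrow> real \<Rightarrow> real \<Rightarrow> real" where
  "qform_inv e a b = (vector [a, b] :: real^2) \<bullet> (matrix_inv (Mmat e) *v vector [a, b])"

end

theory Submission
  imports Defs
begin

text \<open>Splitting off the component of \<open>w\<close> in \<open>V\<^sub>1 \<inter> V\<^sub>2\<close> and the component orthogonal to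
  \<open>S = closure (V\<^sub>1 + V\<^sub>2)\<close> adds the same square to both sides of each inequality, so it
  suffices to treat a vector \<open>z \<in> S\<close> orthogonal to \<open>V\<^sub>1 \<inter> V\<^sub>2\<close>. Such a \<open>z\<close> is a limit of
  sums \<open>a + b\<close> whose summands satisfy \<open>\<langle>a, b\<rangle> \<ge> -\<epsilon> |a| |b|\<close>: for (b) take \<open>a \<in> V\<^sub>1\<close>,
  \<open>b \<in> V\<^sub>2\<close> orthogonal to \<open>V\<^sub>1 \<inter> V\<^sub>2\<close>; for (a) take the residuals \<open>a = x - P\<^sub>2 x\<close>,
  \<open>b = y - P\<^sub>1 y\<close>, which are dense because a vector \<open>r\<close> orthogonal to all of them has
  \<open>P\<^sub>1 r = P\<^sub>1 P\<^sub>2 r\<close> and \<open>P\<^sub>2 r = P\<^sub>2 P\<^sub>1 r\<close>, hence \<open>P\<^sub>1 r = P\<^sub>2 r = 0\<close> as \<open>\<epsilon> < 1\<close>.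
  If \<open>\<langle>z, a\<rangle> \<le> A |a|\<close> and \<open>\<langle>z, b\<rangle> \<le> B |b|\<close>, the Cauchy--Schwarz inequality for the
  scalar product given by \<open>M\<close> yields \<open>\<langle>z, a + b\<rangle> \<le> r |a + b|\<close> with
  \<open>r\<^sup>2 = (A B) M\<^sup>-\<^sup>1 (A B)\<^sup>T\<close>, and in the limit \<open>|z| \<le> r\<close>. For (b) one takes
  \<open>A = |P\<^sub>1 z|\<close>, \<open>B = |P\<^sub>2 z|\<close>, for (a) \<open>A = |z - P\<^sub>2 z|\<close>, \<open>B = |z - P\<^sub>1 z|\<close>.\<close>

section \<open>Orthogonal projections onto closed subspaces\<close>

lemma norm_add_square:
  fixes x y :: "'a::real_inner"
  shows "(norm (x + y))\<^sup>2 = (norm x)\<^sup>2 + 2 * inner x y + (norm y)\<^sup>2"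
  by (simp add: power2_norm_eq_inner inner_add_left inner_add_right inner_diff_left inner_diff_right inner_commute)

lemma norm_diff_square:
  fixes x y :: "'a::real_inner"
  shows "(norm (x - y))\<^sup>2 = (norm x)\<^sup>2 - 2 * inner x y + (norm y)\<^sup>2"
  by (simp add: power2_norm_eq_inner inner_add_left inner_add_right inner_diff_left inner_diff_right inner_commute)

lemma closed_subspace_Int:
  "closed_subspace V \<Longrightarrow> closed_subspace W \<Longrightarrow> closed_subspace (V \<inter> W)"
  by (simp add: closed_subspace_def subspace_inter closed_Int)

lemma closed_subspace_closure:
  fixes S :: "'a::real_inner set"
  assumes "subspace S"
  shows "closed_subspace (closure S)"
proof -
  have add: "(\<lambda>p. fst p + snd p) ` closure (S \<times> S) \<subseteq> closure S"
  proof (rule image_closure_subset)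
    show "(\<lambda>p. fst p + snd p) ` (S \<times> S) \<subseteq> closure S"
      using assms closure_subset subspace_add by fastforce
  qed (intro continuous_intros | simp)+
  have scale: "(\<lambda>x. c *\<^sub>R x) ` closure S \<subseteq> closure S" for c
  proof (rule image_closure_subset)
    show "(\<lambda>x. c *\<^sub>R x) ` S \<subseteq> closure S"
      using assms closure_subset subspace_mul by fastforce
  qed (intro continuous_intros | simp)+
  have "0 \<in> closure S" using assms subspace_0 closure_subset by blast
  moreover have "x + y \<in> closure S" if "x \<in> closure S" "y \<in> closure S" for x y
    using add that unfolding closure_Times by (auto simp: image_subset_iff)
  moreover have "c *\<^sub>R x \<in> closure S" if "x \<in> closure S" for c x
    using scale that by blast
  ultimately show ?thesis by (simp add: closed_subspace_def subspace_def)
qed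

lemma subspace_sums:
  assumes "subspace U" "subspace W"
  shows "subspace {u + w | u w. u \<in> U \<and> w \<in> W}"
proof -
  have "{u + w | u w. u \<in> U \<and> w \<in> W} = (\<lambda>p. fst p + snd p) ` (U \<times> W)"
    by force
  moreover have "linear (\<lambda>p. fst p + snd p)"
    by (intro linear_compose_add linear_fst linear_snd)
  ultimately show ?thesis
    using linear_subspace_image subspace_Times[OF assms] by metis
qed

lemma closed_orthogonal_comp: "closed (U\<^sup>\<bottom>)"
proof -
  have "U\<^sup>\<bottom> = (\<Inter>u\<in>U. {x. inner u x = 0})"
    by (auto simp: orthogonal_comp_def orthogonal_def)
  then show ?thesis by (simp add: closed_INT closed_hyperplane)
qed

lemma closest_point_exists_complete:
  fixes S :: "'a::{real_inner,complete_space} set"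
  assumes "closed S" "convex S" "S \<noteq> {}"
  obtains v where "v \<in> S" "\<And>u. u \<in> S \<Longrightarrow> norm (w - v) \<le> norm (w - u)"
proof -
  define D where "D = (INF u\<in>S. (norm (w - u))\<^sup>2)"
  have bdd: "bdd_below ((\<lambda>u. (norm (w - u))\<^sup>2) ` S)"
    by (rule bdd_belowI2[of _ 0]) simp
  have D_le: "D \<le> (norm (w - u))\<^sup>2" if "u \<in> S" for u
    unfolding D_def using bdd that by (rule cINF_lower)
  have "\<exists>s\<in>S. (norm (w - s))\<^sup>2 < D + 1 / real (Suc n)" for n
    using cINF_less_iff[OF assms(3) bdd, of "D + 1 / real (Suc n)"] by (simp add: D_def)
  then obtain s where s_in: "\<And>n. s n \<in> S"
    and s_near: "\<And>n. (norm (w - s n))\<^sup>2 < D + 1 / real (Suc n)"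
    by metis
  have s_close: "(norm (s m - s n))\<^sup>2 \<le> 2 / real (Suc m) + 2 / real (Suc n)" for m n
  proof -
    have mid: "(1/2) *\<^sub>R s m + (1/2) *\<^sub>R s n \<in> S"
      by (rule convexD[OF assms(2) s_in s_in]) auto
    have "(w - s m) + (w - s n) = 2 *\<^sub>R (w - ((1/2) *\<^sub>R s m + (1/2) *\<^sub>R s n))"
      by (simp add: algebra_simps) (simp add: scaleR_2)
    then have "4 * D \<le> (norm ((w - s m) + (w - s n)))\<^sup>2"
      using D_le[OF mid] by (simp add: power2_eq_square)
    moreover have "(norm (s m - s n))\<^sup>2 + (norm ((w - s m) + (w - s n)))\<^sup>2
        = 2 * (norm (w - s m))\<^sup>2 + 2 * (norm (w - s n))\<^sup>2"
      using norm_add_square[of "w - s m" "w - s n"] norm_diff_square[of "w - s n" "w - s m"]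
      by (simp add: inner_commute)
    ultimately show ?thesis using s_near[of m] s_near[of n] by linarith
  qed
  have "Cauchy s"
  proof (rule metric_CauchyI)
    fix \<epsilon> :: real assume "\<epsilon> > 0"
    then obtain M where M: "M \<noteq> 0" "inverse (real M) < \<epsilon>\<^sup>2 / 4"
      using real_arch_invD[of "\<epsilon>\<^sup>2 / 4"] by auto
    have "dist (s m) (s n) < \<epsilon>" if "m \<ge> M" "n \<ge> M" for m n
    proof -
      have bound: "2 / real (Suc k) \<le> 2 * inverse (real M)" if "k \<ge> M" for k
        using that M(1) by (simp add: divide_simps)
      have "(norm (s m - s n))\<^sup>2 \<le> 4 * inverse (real M)"
        using s_close[of m n] bound[OF that(1)] bound[OF that(2)] by linarith
      then have "(dist (s m) (s n))\<^sup>2 < \<epsilon>\<^sup>2"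
        using M(2) by (simp add: dist_norm)
      then show ?thesis using \<open>\<epsilon> > 0\<close> by (simp add: power_less_imp_less_base)
    qed
    then show "\<exists>M. \<forall>m\<ge>M. \<forall>n\<ge>M. dist (s m) (s n) < \<epsilon>" by blast
  qed
  then obtain v where lim: "s \<longlonglongrightarrow> v"
    using Cauchy_convergent_iff convergent_def by blast
  have "(norm (w - v))\<^sup>2 \<le> D"
  proof (rule LIMSEQ_le)
    show "(\<lambda>n. (norm (w - s n))\<^sup>2) \<longlonglongrightarrow> (norm (w - v))\<^sup>2"
      by (intro tendsto_intros lim)
    show "(\<lambda>n. D + 1 / real (Suc n)) \<longlonglongrightarrow> D"
      using tendsto_add[OF tendsto_const LIMSEQ_inverse_real_of_nat, of D]
      by (simp add: divide_inverse)
    show "\<exists>N. \<forall>n\<ge>N. (norm (w - s n))\<^sup>2 \<le> D + 1 / real (Suc n)"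
      using s_near less_imp_le by blast
  qed
  have "norm (w - v) \<le> norm (w - u)" if "u \<in> S" for u
  proof (rule power2_le_imp_le)
    show "(norm (w - v))\<^sup>2 \<le> (norm (w - u))\<^sup>2"
      using \<open>(norm (w - v))\<^sup>2 \<le> D\<close> D_le[OF that] by linarith
  qed simp
  with closed_sequentially[OF assms(1) s_in lim] show thesis by (rule that)
qed

lemma subspace_closest_point_orthogonal:
  fixes V :: "'a::real_inner set"
  assumes "subspace V" "v \<in> V" "\<And>u. u \<in> V \<Longrightarrow> norm (w - v) \<le> norm (w - u)" "u \<in> V"
  shows "inner (w - v) u = 0"
proof (cases "u = 0")
  case False
  define c where "c = inner (w - v) u"
  define t where "t = c / (norm u)\<^sup>2"
  have "v + t *\<^sub>R u \<in> V" using assms(1,2,4) by (simp add: subspace_add subspace_mul)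
  from assms(3)[OF this] have "(norm (w - v))\<^sup>2 \<le> (norm ((w - v) - t *\<^sub>R u))\<^sup>2"
    by (simp add: algebra_simps)
  also have "\<dots> = (norm (w - v))\<^sup>2 - 2 * t * c + t\<^sup>2 * (norm u)\<^sup>2"
    by (simp add: norm_diff_square c_def power_mult_distrib)
  also have "\<dots> = (norm (w - v))\<^sup>2 - c\<^sup>2 / (norm u)\<^sup>2"
    using False by (simp add: t_def power2_eq_square)
  finally have "c\<^sup>2 / (norm u)\<^sup>2 \<le> 0" by simp
  then show ?thesis using False by (simp add: c_def divide_le_0_iff)
qed simp

lemma orth_proj_eqI:
  fixes V :: "'a::real_inner set"
  assumes "subspace V" "v \<in> V" "\<And>u. u \<in> V \<Longrightarrow> inner (w - v) u = 0"
  shows "orth_proj V w = v"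
  unfolding orth_proj_def
proof (rule the_equality)
  show "v \<in> V \<and> (\<forall>u\<in>V. inner (w - v) u = 0)" using assms by blast
  fix v' assume v': "v' \<in> V \<and> (\<forall>u\<in>V. inner (w - v') u = 0)"
  then have "v - v' \<in> V" using assms(1,2) subspace_diff by blast
  then have "inner (w - v') (v - v') - inner (w - v) (v - v') = 0" using v' assms(3) by simp
  then have "inner (v - v') (v - v') = 0" by (simp add: inner_diff_left)
  then show "v' = v" by simp
qed

lemma orth_proj:
  fixes V :: "'a::{real_inner,complete_space} set"
  assumes "closed_subspace V"
  shows orth_proj_in: "orth_proj V w \<in> V"
    and orth_proj_orthogonal: "u \<in> V \<Longrightarrow> inner (w - orth_proj V w) u = 0"
proof -
  have V: "subspace V" "closed V" using assms by (auto simp: closed_subspace_def)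
  then obtain v where v: "v \<in> V" "\<And>u. u \<in> V \<Longrightarrow> norm (w - v) \<le> norm (w - u)"
    using closest_point_exists_complete subspace_imp_convex subspace_0 by blast
  have "orth_proj V w = v"
    using subspace_closest_point_orthogonal[OF V(1) v] by (intro orth_proj_eqI[OF V(1) v(1)])
  then show "orth_proj V w \<in> V" "u \<in> V \<Longrightarrow> inner (w - orth_proj V w) u = 0"
    using v subspace_closest_point_orthogonal[OF V(1) v] by auto
qed

context
  fixes V :: "'a::{real_inner,complete_space} set"
  assumes V: "closed_subspace V"
begin

lemma orth_proj_id: "v \<in> V \<Longrightarrow> orth_proj V v = v"
  using V by (intro orth_proj_eqI) (auto simp: closed_subspace_def)

lemma linear_orth_proj: "linear (orth_proj V)"
proof -
  have sub: "subspace V" using V by (simp add: closed_subspace_def)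
  note in_V = orth_proj_in[OF V] and orth = orth_proj_orthogonal[OF V]
  show ?thesis
  proof (rule linearI)
    fix x y
    show "orth_proj V (x + y) = orth_proj V x + orth_proj V y"
    proof (rule orth_proj_eqI[OF sub])
      show "orth_proj V x + orth_proj V y \<in> V" using sub in_V by (simp add: subspace_add)
      fix u assume "u \<in> V"
      then show "inner (x + y - (orth_proj V x + orth_proj V y)) u = 0"
        using orth[of u x] orth[of u y] by (simp add: inner_diff_left inner_add_left)
    qed
  next
    fix c x
    show "orth_proj V (c *\<^sub>R x) = c *\<^sub>R orth_proj V x"
    proof (rule orth_proj_eqI[OF sub])
      show "c *\<^sub>R orth_proj V x \<in> V" using sub in_V by (simp add: subspace_mul)
      fix u assume "u \<in> V"
      then show "inner (c *\<^sub>R x - c *\<^sub>R orth_proj V x) u = 0"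
        using orth[of u x] by (simp add: inner_diff_left)
    qed
  qed
qed

lemma orth_proj_diff: "orth_proj V (x - y) = orth_proj V x - orth_proj V y"
  by (rule linear_diff[OF linear_orth_proj])

lemma orth_proj_self_adjoint: "inner (orth_proj V x) y = inner x (orth_proj V y)"
proof -
  have "inner (orth_proj V x) (y - orth_proj V y) = 0" "inner (x - orth_proj V x) (orth_proj V y) = 0"
    using orth_proj_orthogonal[OF V] orth_proj_in[OF V] by (auto simp: inner_commute)
  then show ?thesis by (simp add: inner_diff_left inner_diff_right)
qed

lemma orthogonal_orth_proj_residual: "orthogonal (orth_proj V w) (w - orth_proj V w)"
  using orth_proj_orthogonal[OF V orth_proj_in[OF V]] by (simp add: orthogonal_def inner_commute)

lemma inner_orth_proj_self: "inner (orth_proj V x) x = (norm (orth_proj V x))\<^sup>2"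
  using orthogonal_orth_proj_residual[of x]
  by (simp add: orthogonal_def inner_diff_right power2_norm_eq_inner)

lemma norm_orth_proj_pythagoras:
  "(norm w)\<^sup>2 = (norm (orth_proj V w))\<^sup>2 + (norm (w - orth_proj V w))\<^sup>2"
  using norm_add_Pythagorean[OF orthogonal_orth_proj_residual, of w] by simp

lemma norm_orth_proj_le: "norm (orth_proj V w) \<le> norm w"
proof (rule power2_le_imp_le)
  show "(norm (orth_proj V w))\<^sup>2 \<le> (norm w)\<^sup>2"
    using norm_orth_proj_pythagoras[of w] by simp
qed simp

lemma continuous_on_orth_proj: "continuous_on S (orth_proj V)"
proof (rule linear_continuous_on)
  show "bounded_linear (orth_proj V)"
    using linear_orth_proj norm_orth_proj_le
    by (intro bounded_linear_intro[where K = 1]) (auto simp: linear_add linear_scale)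
qed

lemma inner_orth_proj_left:
  assumes "u \<in> V"
  shows "inner w u = inner (orth_proj V w) u"
proof -
  have "inner (w - orth_proj V w) u = 0" using orth_proj_orthogonal[OF V assms] .
  then show ?thesis by (simp add: inner_diff_left)
qed

lemma inner_orth_proj_residual:
  "inner w (x - orth_proj V x) = inner (w - orth_proj V w) (x - orth_proj V x)"
proof -
  have "inner (x - orth_proj V x) (orth_proj V w) = 0"
    using orth_proj_orthogonal[OF V orth_proj_in[OF V]] .
  then show ?thesis by (simp add: inner_diff_left inner_commute)
qed

lemma orth_proj_eq_0: "(\<And>u. u \<in> V \<Longrightarrow> inner w u = 0) \<Longrightarrow> orth_proj V w = 0"
  using V by (intro orth_proj_eqI) (auto simp: closed_subspace_def subspace_0)

lemma orth_proj_residual_in_orthogonal_comp: "w - orth_proj V w \<in> V\<^sup>\<bottom>"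
  using orth_proj_orthogonal[OF V] by (auto simp: orthogonal_comp_def orthogonal_def inner_commute)

lemma orth_proj_in_orthogonal_comp:
  assumes "U \<subseteq> V" "x \<in> U\<^sup>\<bottom>"
  shows "orth_proj V x \<in> U\<^sup>\<bottom>"
proof -
  have "inner u (orth_proj V x) = 0" if "u \<in> U" for u
    using that assms orth_proj_self_adjoint[of u x] orth_proj_id[of u]
    by (auto simp: orthogonal_comp_def orthogonal_def)
  then show ?thesis by (simp add: orthogonal_comp_def orthogonal_def)
qed

lemma infdist_eq_norm_orth_proj_residual: "infdist w V = norm (w - orth_proj V w)"
proof (rule antisym)
  show "infdist w V \<le> norm (w - orth_proj V w)"
    using infdist_le[OF orth_proj_in[OF V], of w] by (simp add: dist_norm)
  have "norm (w - orth_proj V w) \<le> dist w a" if "a \<in> V" for a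
  proof -
    have "orth_proj V w - a \<in> V"
      using V that orth_proj_in[OF V] by (simp add: closed_subspace_def subspace_diff)
    then have "orthogonal (w - orth_proj V w) (orth_proj V w - a)"
      using orth_proj_orthogonal[OF V] by (simp add: orthogonal_def)
    from norm_add_Pythagorean[OF this]
    have "(norm (w - orth_proj V w))\<^sup>2 \<le> (norm (w - a))\<^sup>2" by simp
    then show ?thesis unfolding dist_norm by (rule power2_le_imp_le) simp
  qed
  moreover have "V \<noteq> {}" using V subspace_0 by (auto simp: closed_subspace_def)
  ultimately show "norm (w - orth_proj V w) \<le> infdist w V"
    unfolding infdist_notempty[OF \<open>V \<noteq> {}\<close>] by (intro cINF_greatest)
qed

lemma orth_proj_orth_proj_subset:
  assumes "closed_subspace U" "U \<subseteq> V"
  shows "orth_proj U (orth_proj V w) = orth_proj U w"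
proof -
  have "orth_proj U w = orth_proj U (orth_proj V w)"
  proof (rule orth_proj_eqI)
    show "subspace U" using assms(1) by (simp add: closed_subspace_def)
    show "orth_proj U (orth_proj V w) \<in> U" by (rule orth_proj_in[OF assms(1)])
    fix u assume "u \<in> U"
    then have "inner (w - orth_proj V w) u = 0"
      "inner (orth_proj V w - orth_proj U (orth_proj V w)) u = 0"
      using assms orth_proj_orthogonal[OF V] orth_proj_orthogonal[OF assms(1)] by auto
    then show "inner (w - orth_proj U (orth_proj V w)) u = 0"
      by (simp add: inner_diff_left)
  qed
  then show ?thesis ..
qed

end

lemma orth_proj_eq_orth_proj_orth_proj:
  fixes V W :: "'a::{real_inner,complete_space} set"
  assumes V: "closed_subspace V" and W: "closed_subspace W"
    and r: "\<And>x. x \<in> V \<Longrightarrow> inner r (x - orth_proj W x) = 0"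
  shows "orth_proj V r = orth_proj V (orth_proj W r)"
proof -
  have "inner (r - orth_proj W r) x = 0" if "x \<in> V" for x
    using r[OF that] orth_proj_self_adjoint[OF W, of r x] by (simp add: inner_diff_left inner_diff_right)
  then have "orth_proj V (r - orth_proj W r) = 0" by (rule orth_proj_eq_0[OF V])
  then show ?thesis by (simp add: orth_proj_diff[OF V])
qed

section \<open>The Friedrichs angle\<close>

lemma diff_le_of_square_le:
  fixes B C H k :: real
  assumes "C \<le> k * B" "C\<^sup>2 \<le> H * B" "0 \<le> C" "C \<le> B" "0 \<le> H"
  shows "C - H \<le> k * (B - C)"
proof (cases "B = 0")
  case False
  then have "0 < B" using assms(3,4) by simp
  have "B * (C - H) \<le> C * (B - C)"
    using assms(2) by (simp add: algebra_simps power2_eq_square)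
  also have "\<dots> \<le> (k * B) * (B - C)"
    using assms(1,4) by (intro mult_right_mono) auto
  finally show ?thesis
    using \<open>0 < B\<close> by (simp add: mult_le_cancel_left_pos mult.assoc mult.left_commute[of B])
qed (use assms in simp)

lemma cos_angle_commute: "cos_angle V W = cos_angle W V"
  unfolding cos_angle_def
  by (rule arg_cong[where f = Sup]) (fastforce simp: inner_commute)

lemma abs_inner_le_cos_angle:
  fixes V W :: "'a::real_inner set"
  assumes "subspace V" "subspace W" "x \<in> V" "y \<in> W" "x \<in> (V \<inter> W)\<^sup>\<bottom>" "y \<in> (V \<inter> W)\<^sup>\<bottom>"
  shows "\<bar>inner x y\<bar> \<le> cos_angle V W * norm x * norm y"
proof (cases "x = 0 \<or> y = 0")
  case False
  define A where "A = {\<bar>inner v1 v2\<bar> | v1 v2.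
      v1 \<in> V \<and> v2 \<in> W \<and> norm v1 = 1 \<and> norm v2 = 1 \<and>
      (\<forall>u\<in>V \<inter> W. inner v1 u = 0) \<and> (\<forall>u\<in>V \<inter> W. inner v2 u = 0)}"
  have "\<bar>inner (x /\<^sub>R norm x) (y /\<^sub>R norm y)\<bar> \<in> A"
    using assms False unfolding A_def
    by (intro CollectI exI[of _ "x /\<^sub>R norm x"] exI[of _ "y /\<^sub>R norm y"])
       (auto simp: subspace_mul orthogonal_comp_def orthogonal_def inner_commute)
  moreover have "bdd_above A"
    unfolding A_def by (rule bdd_aboveI[of _ 1]) (auto intro: order_trans[OF Cauchy_Schwarz_ineq2])
  ultimately have "\<bar>inner (x /\<^sub>R norm x) (y /\<^sub>R norm y)\<bar> \<le> cos_angle V W"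
    unfolding cos_angle_def A_def[symmetric] by (rule cSup_upper)
  then show ?thesis
    using False by (simp add: abs_mult divide_simps mult_ac)
qed auto

lemma exists_nonzero_in_orthogonal_comp:
  fixes U V :: "'a::{real_inner,complete_space} set"
  assumes "closed_subspace U" "subspace V" "U \<subseteq> V" "\<not> V \<subseteq> U"
  obtains x where "x \<in> V" "x \<in> U\<^sup>\<bottom>" "x \<noteq> 0"
proof -
  obtain v where v: "v \<in> V" "v \<notin> U" using assms(4) by blast
  show thesis
  proof
    show "v - orth_proj U v \<in> V"
      using assms(2,3) v(1) orth_proj_in[OF assms(1)] by (blast intro: subspace_diff)
    show "v - orth_proj U v \<in> U\<^sup>\<bottom>" by (rule orth_proj_residual_in_orthogonal_comp[OF assms(1)])
    show "v - orth_proj U v \<noteq> 0" using v(2) orth_proj_in[OF assms(1), of v] by force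
  qed
qed

lemma cos_angle_nonneg:
  fixes V W :: "'a::{real_inner,complete_space} set"
  assumes V: "closed_subspace V" and W: "closed_subspace W" and "\<not> V \<subseteq> W" "\<not> W \<subseteq> V"
  shows "0 \<le> cos_angle V W"
proof -
  have VW: "closed_subspace (V \<inter> W)" using V W by (rule closed_subspace_Int)
  have sub: "subspace V" "subspace W" using V W by (auto simp: closed_subspace_def)
  obtain x where x: "x \<in> V" "x \<in> (V \<inter> W)\<^sup>\<bottom>" "x \<noteq> 0"
    using exists_nonzero_in_orthogonal_comp[OF VW sub(1)] assms(3) by blast
  obtain y where y: "y \<in> W" "y \<in> (V \<inter> W)\<^sup>\<bottom>" "y \<noteq> 0"
    using exists_nonzero_in_orthogonal_comp[OF VW sub(2)] assms(4) by blast
  have "0 \<le> cos_angle V W * (norm x * norm y)"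
    using abs_inner_le_cos_angle[OF sub x(1) y(1) x(2) y(2)] abs_ge_zero[of "inner x y"]
    by (simp add: mult_ac)
  moreover have "0 < norm x * norm y" using x(3) y(3) by simp
  ultimately show ?thesis by (metis mult_neg_pos not_le)
qed

lemma norm_orth_proj_le_cos_angle:
  fixes V W :: "'a::{real_inner,complete_space} set"
  assumes V: "closed_subspace V" and W: "closed_subspace W" and e: "0 \<le> cos_angle V W"
    and y: "y \<in> W" "y \<in> (V \<inter> W)\<^sup>\<bottom>"
  shows "norm (orth_proj V y) \<le> cos_angle V W * norm y"
proof (cases "orth_proj V y = 0")
  case False
  have sub: "subspace V" "subspace W" using V W by (auto simp: closed_subspace_def)
  have p: "orth_proj V y \<in> V" "orth_proj V y \<in> (V \<inter> W)\<^sup>\<bottom>"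
    using orth_proj_in[OF V] orth_proj_in_orthogonal_comp[OF V _ y(2)] by auto
  have "norm (orth_proj V y) * norm (orth_proj V y) = inner (orth_proj V y) y"
    using inner_orth_proj_self[OF V] by (simp add: power2_eq_square)
  also have "\<dots> \<le> cos_angle V W * norm (orth_proj V y) * norm y"
    using abs_inner_le_cos_angle[OF sub p(1) y(1) p(2) y(2)] by linarith
  finally have "norm (orth_proj V y) * norm (orth_proj V y) \<le> (cos_angle V W * norm y) * norm (orth_proj V y)"
    by (simp add: mult_ac)
  then show ?thesis using False by (simp add: mult_le_cancel_right)
qed (use e in simp)

lemma norm_orth_proj_residual_le_cos_angle:
  fixes V W :: "'a::{real_inner,complete_space} set"
  assumes V: "closed_subspace V" and W: "closed_subspace W" and e: "0 \<le> cos_angle V W"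
    and b: "b \<in> W" "b \<in> (V \<inter> W)\<^sup>\<bottom>"
  shows "norm (orth_proj V b - orth_proj W (orth_proj V b)) \<le> cos_angle V W * norm (b - orth_proj V b)"
proof -
  define c where "c = orth_proj V b"
  define h where "h = orth_proj W c"
  have c_h: "(norm (c - h))\<^sup>2 = (norm c)\<^sup>2 - (norm h)\<^sup>2"
    using norm_orth_proj_pythagoras[OF W, of c] by (simp add: h_def)
  have b_c: "(norm (b - c))\<^sup>2 = (norm b)\<^sup>2 - (norm c)\<^sup>2"
    using norm_orth_proj_pythagoras[OF V, of b] by (simp add: c_def)
  have "norm c \<le> cos_angle V W * norm b"
    unfolding c_def by (rule norm_orth_proj_le_cos_angle[OF V W e b])
  from power_mono[OF this norm_ge_zero, of 2]
  have c_le: "(norm c)\<^sup>2 \<le> (cos_angle V W)\<^sup>2 * (norm b)\<^sup>2"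
    by (simp add: power_mult_distrib)
  \<comment> \<open>\<open>|c|\<^sup>2 = \<langle>c, b\<rangle> = \<langle>h, b\<rangle>\<close> because \<open>b \<in> W\<close>\<close>
  have "(norm c)\<^sup>2 = inner h b"
    using inner_orth_proj_self[OF V, of b] orth_proj_self_adjoint[OF W, of c b] orth_proj_id[OF W b(1)]
    by (simp add: c_def h_def inner_commute)
  then have "(norm c)\<^sup>2 \<le> norm h * norm b"
    using norm_cauchy_schwarz[of h b] by simp
  from power_mono[OF this zero_le_power2, of 2]
  have c_h_b: "((norm c)\<^sup>2)\<^sup>2 \<le> (norm h)\<^sup>2 * (norm b)\<^sup>2"
    by (simp add: power_mult_distrib)
  have "(norm c)\<^sup>2 - (norm h)\<^sup>2 \<le> (cos_angle V W)\<^sup>2 * ((norm b)\<^sup>2 - (norm c)\<^sup>2)"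
    using c_le c_h_b b_c zero_le_power2[of "norm (b - c)"]
    by (intro diff_le_of_square_le) (auto simp: mult.commute)
  then have "(norm (c - h))\<^sup>2 \<le> (cos_angle V W * norm (b - c))\<^sup>2"
    by (simp add: c_h b_c power_mult_distrib)
  then show ?thesis
    unfolding c_def h_def by (rule power2_le_imp_le) (use e in simp)
qed

lemma abs_inner_orth_proj_residual_le_cos_angle:
  fixes V W :: "'a::{real_inner,complete_space} set"
  assumes V: "closed_subspace V" and W: "closed_subspace W" and e: "0 \<le> cos_angle V W"
    and u: "u \<in> W\<^sup>\<bottom>" and b: "b \<in> W"
  shows "\<bar>inner u (b - orth_proj V b)\<bar> \<le> cos_angle V W * norm u * norm (b - orth_proj V b)"
proof -
  have VW: "closed_subspace (V \<inter> W)" using V W by (rule closed_subspace_Int)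
  define b' where "b' = b - orth_proj (V \<inter> W) b"
  define c where "c = orth_proj V b'"
  have b': "b' \<in> W" "b' \<in> (V \<inter> W)\<^sup>\<bottom>"
    using W b orth_proj_in[OF VW, of b] orth_proj_residual_in_orthogonal_comp[OF VW]
    by (auto simp: b'_def closed_subspace_def subspace_diff)
  have residual: "b - orth_proj V b = b' - c"
    using orth_proj_in[OF VW, of b] orth_proj_id[OF V, of "orth_proj (V \<inter> W) b"]
    by (simp add: b'_def c_def orth_proj_diff[OF V])
  have "inner u b' = 0" "inner u (orth_proj W c) = 0"
    using u b'(1) orth_proj_in[OF W, of c] by (auto simp: orthogonal_comp_def orthogonal_def inner_commute)
  then have "\<bar>inner u (b' - c)\<bar> = \<bar>inner u (c - orth_proj W c)\<bar>"
    by (simp add: inner_diff_right)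
  also have "\<dots> \<le> norm u * norm (c - orth_proj W c)"
    by (rule Cauchy_Schwarz_ineq2)
  also have "\<dots> \<le> norm u * (cos_angle V W * norm (b' - c))"
    unfolding c_def by (intro mult_left_mono norm_orth_proj_residual_le_cos_angle[OF V W e b']) simp
  finally show ?thesis
    unfolding residual by (simp add: mult_ac)
qed

section \<open>The quadratic form of \<open>M\<^sup>-\<^sup>1\<close>\<close>

lemma matrix_inv_eqI:
  fixes A :: "'a::semiring_1^'n^'n"
  assumes "A ** B = mat 1" "B ** A = mat 1"
  shows "matrix_inv A = B"
proof -
  have "A ** matrix_inv A = mat 1"
    unfolding matrix_inv_def by (rule someI2[of _ B]) (use assms in auto)
  then show ?thesis
    by (metis assms(2) matrix_mul_assoc matrix_mul_lid matrix_mul_rid)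
qed

lemma qform_inv_eq:
  fixes e a b :: real
  assumes "\<bar>e\<bar> < 1"
  shows "qform_inv e a b = (a\<^sup>2 + 2 * e * a * b + b\<^sup>2) / (1 - e\<^sup>2)"
proof -
  define D where "D = 1 - e\<^sup>2"
  have "D \<noteq> 0" "e * e \<noteq> 1"
    using assms abs_square_less_1[of e] by (auto simp: D_def power2_eq_square)
  define N :: "real^2^2" where "N = (\<chi> i j. if i = j then 1 / D else e / D)"
  have M: "Mmat e $ 1 $ 1 = 1" "Mmat e $ 1 $ 2 = - e" "Mmat e $ 2 $ 1 = - e" "Mmat e $ 2 $ 2 = 1"
    by (simp_all add: Mmat_def)
  have N: "N $ 1 $ 1 = 1 / D" "N $ 1 $ 2 = e / D" "N $ 2 $ 1 = e / D" "N $ 2 $ 2 = 1 / D"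
    by (simp_all add: N_def)
  have MN: "Mmat e ** N = mat 1" "N ** Mmat e = mat 1"
    unfolding matrix_matrix_mult_def mat_def
    by (simp_all add: vec_eq_iff forall_2 sum_2 M N)
       (use \<open>e * e \<noteq> 1\<close> in \<open>simp_all add: D_def divide_simps power2_eq_square\<close>)
  then have "matrix_inv (Mmat e) = N"
    by (rule matrix_inv_eqI)
  then have "qform_inv e a b = a * (a / D + e * b / D) + b * (e * a / D + b / D)"
    unfolding qform_inv_def by (simp add: inner_vec_def matrix_vector_mult_def sum_2 N)
  also have "\<dots> = (a\<^sup>2 + 2 * e * a * b + b\<^sup>2) / D"
    using \<open>D \<noteq> 0\<close> by (simp add: divide_simps power2_eq_square algebra_simps)
  finally show ?thesis by (simp add: D_def)
qed

lemma qform_inv_commute: "\<bar>e\<bar> < 1 \<Longrightarrow> qform_inv e a b = qform_inv e b a"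
  by (simp add: qform_inv_eq algebra_simps)

lemma qform_inv_nonneg:
  assumes "0 \<le> e" "e < 1" "0 \<le> a" "0 \<le> b"
  shows "0 \<le> qform_inv e a b"
  using assms abs_square_less_1[of e] by (simp add: qform_inv_eq)

lemma square_le_qform_inv_mult:
  fixes e A B X Y :: real
  assumes "\<bar>e\<bar> < 1"
  shows "(A * X + B * Y)\<^sup>2 \<le> qform_inv e A B * (X\<^sup>2 + Y\<^sup>2 - 2 * e * X * Y)"
proof -
  have "0 < 1 - e\<^sup>2" using assms abs_square_less_1[of e] by simp
  have "(A\<^sup>2 + 2*e*A*B + B\<^sup>2) * (X\<^sup>2 + Y\<^sup>2 - 2*e*X*Y) - (1 - e\<^sup>2) * (A*X + B*Y)\<^sup>2
      = (A*Y - B*X - e*(A*X - B*Y))\<^sup>2"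
    by (simp add: power2_eq_square algebra_simps)
  then have "(1 - e\<^sup>2) * (A*X + B*Y)\<^sup>2 \<le> (A\<^sup>2 + 2*e*A*B + B\<^sup>2) * (X\<^sup>2 + Y\<^sup>2 - 2*e*X*Y)"
    using zero_le_power2[of "A*Y - B*X - e*(A*X - B*Y)"] by linarith
  then have "(A*X + B*Y)\<^sup>2 \<le> (A\<^sup>2 + 2*e*A*B + B\<^sup>2) * (X\<^sup>2 + Y\<^sup>2 - 2*e*X*Y) / (1 - e\<^sup>2)"
    using \<open>0 < 1 - e\<^sup>2\<close> by (simp add: le_divide_eq mult.commute)
  then show ?thesis by (simp add: qform_inv_eq[OF assms])
qed

lemma qform_inv_add_le:
  fixes e t1 t2 d1 d2 R :: real
  assumes "0 \<le> e" "e < 1" "0 \<le> t1" "0 \<le> t2" "0 \<le> d1" "0 \<le> d2" "0 \<le> R"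
    and d1: "d1\<^sup>2 = t1\<^sup>2 + R" and d2: "d2\<^sup>2 = t2\<^sup>2 + R"
  shows "qform_inv e t1 t2 + R \<le> qform_inv e d1 d2"
proof -
  have D: "0 < 1 - e\<^sup>2" using assms(1,2) abs_square_less_1[of e] by simp
  have "t1 \<le> d1" "t2 \<le> d2"
    using d1 d2 \<open>0 \<le> R\<close> \<open>0 \<le> d1\<close> \<open>0 \<le> d2\<close> by (auto intro: power2_le_imp_le)
  then have "e * (t1 * t2) \<le> e * (d1 * d2)"
    using assms by (intro mult_left_mono mult_mono) auto
  moreover have "R * (1 - e\<^sup>2) \<le> 2 * R" using \<open>0 \<le> R\<close> D by (simp add: algebra_simps)
  ultimately have "t1\<^sup>2 + 2*e*t1*t2 + t2\<^sup>2 + R * (1 - e\<^sup>2) \<le> d1\<^sup>2 + 2*e*d1*d2 + d2\<^sup>2"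
    using d1 d2 by (simp add: algebra_simps)
  then show ?thesis
    using D assms(1,2) by (simp add: qform_inv_eq divide_simps)
qed

lemma norm_square_le_qform_inv_closure_sums:
  fixes z :: "'a::real_inner"
  assumes e: "0 \<le> e" "e < 1" and "0 \<le> A" "0 \<le> B"
    and angle: "\<And>a b. a \<in> U1 \<Longrightarrow> b \<in> U2 \<Longrightarrow> - (e * norm a * norm b) \<le> inner a b"
    and A: "\<And>a. a \<in> U1 \<Longrightarrow> inner z a \<le> A * norm a"
    and B: "\<And>b. b \<in> U2 \<Longrightarrow> inner z b \<le> B * norm b"
    and z: "z \<in> closure {a + b | a b. a \<in> U1 \<and> b \<in> U2}"
  shows "(norm z)\<^sup>2 \<le> qform_inv e A B"
proof -
  define r where "r = sqrt (qform_inv e A B)"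
  have F: "0 \<le> qform_inv e A B" using assms by (intro qform_inv_nonneg)
  have "{a + b | a b. a \<in> U1 \<and> b \<in> U2} \<subseteq> {g. inner z g \<le> r * norm g}"
  proof clarify
    fix a b assume ab: "a \<in> U1" "b \<in> U2"
    have "(A * norm a + B * norm b)\<^sup>2
        \<le> qform_inv e A B * ((norm a)\<^sup>2 + (norm b)\<^sup>2 - 2 * e * norm a * norm b)"
      using e by (intro square_le_qform_inv_mult) simp
    also have "\<dots> \<le> qform_inv e A B * (norm (a + b))\<^sup>2"
      by (rule mult_left_mono[OF _ F]) (use angle[OF ab] in \<open>simp add: norm_add_square\<close>)
    also have "\<dots> = (r * norm (a + b))\<^sup>2"
      using F by (simp add: r_def power_mult_distrib)
    finally have "A * norm a + B * norm b \<le> r * norm (a + b)"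
      by (rule power2_le_imp_le) (use F in \<open>simp add: r_def\<close>)
    then show "inner z (a + b) \<le> r * norm (a + b)"
      using A[OF ab(1)] B[OF ab(2)] by (simp add: inner_add_right)
  qed
  moreover have "closed {g. inner z g \<le> r * norm g}"
    by (intro closed_Collect_le continuous_intros)
  ultimately have "inner z z \<le> r * norm z"
    using z closure_minimal by blast
  then have "norm z * norm z \<le> r * norm z"
    by (simp add: power2_norm_eq_inner[symmetric] power2_eq_square)
  then have "norm z \<le> r"
    using F by (cases "z = 0") (auto simp: r_def mult_le_cancel_right)
  then show ?thesis
    using F power_mono[OF \<open>norm z \<le> r\<close> norm_ge_zero, of 2] by (simp add: r_def)
qed

section \<open>Two closed subspaces at an angle with cosine below 1\<close>

locale two_closed_subspaces =
  fixes V1 V2 :: "'a::{real_inner,complete_space} set"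
  assumes closed1: "closed_subspace V1" and closed2: "closed_subspace V2"
    and angle_nonneg: "0 \<le> cos_angle V1 V2" and angle_less_1: "cos_angle V1 V2 < 1"
begin

abbreviation "\<epsilon> \<equiv> cos_angle V1 V2"
abbreviation "V0 \<equiv> V1 \<inter> V2"
abbreviation "S12 \<equiv> closure {x + y | x y. x \<in> V1 \<and> y \<in> V2}"
abbreviation "P0 \<equiv> orth_proj V0"
abbreviation "P1 \<equiv> orth_proj V1"
abbreviation "P2 \<equiv> orth_proj V2"
abbreviation "P12 \<equiv> orth_proj S12"

lemma subspace1: "subspace V1" and subspace2: "subspace V2"
  using closed1 closed2 by (auto simp: closed_subspace_def)

lemma closed0: "closed_subspace V0"
  using closed1 closed2 by (rule closed_subspace_Int)

lemma closed12: "closed_subspace S12"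
  by (intro closed_subspace_closure subspace_sums subspace1 subspace2)

lemma subset_S12: "V1 \<subseteq> S12" "V2 \<subseteq> S12"
proof -
  have "x + 0 \<in> {x + y | x y. x \<in> V1 \<and> y \<in> V2}" if "x \<in> V1" for x
    using that subspace_0[OF subspace2] by blast
  moreover have "0 + y \<in> {x + y | x y. x \<in> V1 \<and> y \<in> V2}" if "y \<in> V2" for y
    using that subspace_0[OF subspace1] by blast
  ultimately show "V1 \<subseteq> S12" "V2 \<subseteq> S12"
    using closure_subset by fastforce+
qed

lemma angle_swap: "0 \<le> cos_angle V2 V1" "cos_angle V2 V1 = \<epsilon>"
  using angle_nonneg by (simp_all add: cos_angle_commute)

lemma in_closure_sums_orthogonal_comp:
  assumes "z \<in> S12" "z \<in> V0\<^sup>\<bottom>"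
  shows "z \<in> closure {x + y | x y. x \<in> V1 \<inter> V0\<^sup>\<bottom> \<and> y \<in> V2 \<inter> V0\<^sup>\<bottom>}"
    (is "z \<in> closure ?T")
proof -
  \<comment> \<open>Removing the \<open>V0\<close>-component maps sums in \<open>V1 + V2\<close> to sums in \<open>?T\<close> and fixes \<open>z\<close>.\<close>
  have "(\<lambda>w. w - P0 w) ` S12 \<subseteq> closure ?T"
  proof (rule image_closure_subset)
    show "continuous_on S12 (\<lambda>w. w - P0 w)"
      by (intro continuous_intros continuous_on_orth_proj[OF closed0])
    have residual: "x - P0 x \<in> V \<inter> V0\<^sup>\<bottom>" if "subspace V" "V0 \<subseteq> V" "x \<in> V" for V x
      using that orth_proj_in[OF closed0, of x] orth_proj_residual_in_orthogonal_comp[OF closed0]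
      by (auto intro: subspace_diff)
    have "(x + y) - P0 (x + y) \<in> ?T" if "x \<in> V1" "y \<in> V2" for x y
    proof -
      have "x - P0 x \<in> V1 \<inter> V0\<^sup>\<bottom>" "y - P0 y \<in> V2 \<inter> V0\<^sup>\<bottom>"
        using that subspace1 subspace2 residual by auto
      moreover have "(x + y) - P0 (x + y) = (x - P0 x) + (y - P0 y)"
        using linear_add[OF linear_orth_proj[OF closed0]] by simp
      ultimately show ?thesis by blast
    qed
    then show "(\<lambda>w. w - P0 w) ` {x + y | x y. x \<in> V1 \<and> y \<in> V2} \<subseteq> closure ?T"
      using closure_subset by blast
  qed simp
  moreover have "P0 z = 0"
    using assms(2) by (intro orth_proj_eq_0[OF closed0]) (auto simp: orthogonal_comp_def orthogonal_def inner_commute)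
  ultimately show ?thesis
    using assms(1) by force
qed

lemma orthogonal_residual_sums_eq_0:
  assumes r: "r \<in> S12" "r \<in> V0\<^sup>\<bottom>"
    and orth1: "\<And>x. x \<in> V1 \<Longrightarrow> inner r (x - P2 x) = 0"
    and orth2: "\<And>y. y \<in> V2 \<Longrightarrow> inner r (y - P1 y) = 0"
  shows "r = 0"
proof -
  have P1r: "P1 r = P1 (P2 r)" and P2r: "P2 r = P2 (P1 r)"
    using orth_proj_eq_orth_proj_orth_proj[OF closed1 closed2 orth1]
      orth_proj_eq_orth_proj_orth_proj[OF closed2 closed1 orth2] by blast+
  have in0: "P1 r \<in> V0\<^sup>\<bottom>" "P2 r \<in> V0\<^sup>\<bottom>"
    using orth_proj_in_orthogonal_comp[OF closed1 _ r(2)] orth_proj_in_orthogonal_comp[OF closed2 _ r(2)]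
    by auto
  have "norm (P1 r) \<le> \<epsilon> * norm (P2 r)"
    unfolding P1r using orth_proj_in[OF closed2] in0(2)
    by (intro norm_orth_proj_le_cos_angle[OF closed1 closed2 angle_nonneg]) auto
  also have "norm (P2 r) \<le> \<epsilon> * norm (P1 r)"
  proof -
    have "P1 r \<in> (V2 \<inter> V1)\<^sup>\<bottom>" using in0(1) by (simp add: Int_commute)
    with orth_proj_in[OF closed1] show ?thesis
      unfolding P2r angle_swap(2)[symmetric]
      by (intro norm_orth_proj_le_cos_angle[OF closed2 closed1 angle_swap(1)])
  qed
  then have "\<epsilon> * norm (P2 r) \<le> \<epsilon> * (\<epsilon> * norm (P1 r))"
    by (rule mult_left_mono[OF _ angle_nonneg])
  finally have "(1 - \<epsilon> * \<epsilon>) * norm (P1 r) \<le> 0"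
    by (simp add: algebra_simps)
  moreover have "0 < 1 - \<epsilon> * \<epsilon>"
    using angle_nonneg angle_less_1 abs_square_less_1[of \<epsilon>] by (simp add: power2_eq_square)
  ultimately have "P1 r = 0" "P2 r = 0"
    using P2r linear_0[OF linear_orth_proj[OF closed2]] by (auto simp: mult_le_0_iff)
  then have "inner r v = 0" if "v \<in> V1 \<or> v \<in> V2" for v
    using that inner_orth_proj_left[OF closed1, of v r] inner_orth_proj_left[OF closed2, of v r] by auto
  then have "{x + y | x y. x \<in> V1 \<and> y \<in> V2} \<subseteq> {v. inner r v = 0}"
    by (auto simp: inner_add_right)
  then have "S12 \<subseteq> {v. inner r v = 0}"
    by (rule closure_minimal) (rule closed_hyperplane)
  then show "r = 0" using r(1) by auto
qed

abbreviation "residual_sums \<equiv>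
  {a + b | a b. a \<in> (\<lambda>x. x - P2 x) ` V1 \<and> b \<in> (\<lambda>y. y - P1 y) ` V2}"

lemma closed_subspace_residual_sums: "closed_subspace (closure residual_sums)"
proof -
  have "linear (\<lambda>x. x - P1 x)" "linear (\<lambda>x. x - P2 x)"
    using linear_compose_sub[OF linear_ident linear_orth_proj[OF closed1]]
      linear_compose_sub[OF linear_ident linear_orth_proj[OF closed2]] by auto
  then show ?thesis
    using subspace1 subspace2
    by (intro closed_subspace_closure subspace_sums) (auto intro: linear_subspace_image)
qed

lemma residuals_in_closure_residual_sums:
  "x \<in> V1 \<Longrightarrow> x - P2 x \<in> closure residual_sums"
  "y \<in> V2 \<Longrightarrow> y - P1 y \<in> closure residual_sums"
proof -
  have zero: "0 \<in> (\<lambda>x. x - P2 x) ` V1" "0 \<in> (\<lambda>y. y - P1 y) ` V2"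
    using imageI[OF subspace_0[OF subspace1], of "\<lambda>x. x - P2 x"]
      imageI[OF subspace_0[OF subspace2], of "\<lambda>y. y - P1 y"]
      linear_0[OF linear_orth_proj[OF closed1]] linear_0[OF linear_orth_proj[OF closed2]]
    by simp_all
  have sum: "a + b \<in> residual_sums"
    if "a \<in> (\<lambda>x. x - P2 x) ` V1" "b \<in> (\<lambda>y. y - P1 y) ` V2" for a b
    using that by blast
  show "x - P2 x \<in> closure residual_sums" if "x \<in> V1"
    using closure_subset[of residual_sums] sum[OF imageI[OF that] zero(2)] by (simp add: subset_iff)
  show "y - P1 y \<in> closure residual_sums" if "y \<in> V2"
    using closure_subset[of residual_sums] sum[OF zero(1) imageI[OF that]] by (simp add: subset_iff)
qed

lemma closure_residual_sums_subset: "closure residual_sums \<subseteq> S12 \<inter> V0\<^sup>\<bottom>"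
proof -
  have "residual_sums \<subseteq> {x + y | x y. x \<in> V1 \<and> y \<in> V2}"
  proof clarify
    fix x y assume "x \<in> V1" "y \<in> V2"
    then have "x - P1 y \<in> V1" "y - P2 x \<in> V2"
      using orth_proj_in[OF closed1] orth_proj_in[OF closed2] subspace1 subspace2
      by (auto intro: subspace_diff)
    moreover have "(x - P2 x) + (y - P1 y) = (x - P1 y) + (y - P2 x)" by simp
    ultimately show "\<exists>x' y'. (x - P2 x) + (y - P1 y) = x' + y' \<and> x' \<in> V1 \<and> y' \<in> V2" by blast
  qed
  then have "closure residual_sums \<subseteq> S12" by (rule closure_mono)
  moreover have "V1\<^sup>\<bottom> \<subseteq> V0\<^sup>\<bottom>" "V2\<^sup>\<bottom> \<subseteq> V0\<^sup>\<bottom>"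
    by (rule orthogonal_comp_anti_mono, blast)+
  then have "x - P2 x \<in> V0\<^sup>\<bottom>" "x - P1 x \<in> V0\<^sup>\<bottom>" for x
    using orth_proj_residual_in_orthogonal_comp[OF closed2, of x]
      orth_proj_residual_in_orthogonal_comp[OF closed1, of x] by blast+
  then have "residual_sums \<subseteq> V0\<^sup>\<bottom>"
    using subspace_add[OF subspace_orthogonal_comp] by blast
  then have "closure residual_sums \<subseteq> V0\<^sup>\<bottom>"
    by (rule closure_minimal) (rule closed_orthogonal_comp)
  ultimately show ?thesis by blast
qed

lemma in_closure_residual_sums:
  assumes z: "z \<in> S12" "z \<in> V0\<^sup>\<bottom>"
  shows "z \<in> closure residual_sums"
proof -
  note W = closed_subspace_residual_sums
  define r where "r = z - orth_proj (closure residual_sums) z"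
  have "orth_proj (closure residual_sums) z \<in> S12 \<inter> V0\<^sup>\<bottom>"
    using orth_proj_in[OF W, of z] closure_residual_sums_subset by blast
  then have "r \<in> S12" "r \<in> V0\<^sup>\<bottom>"
    using z closed12 subspace_orthogonal_comp[of V0]
    by (auto simp: r_def closed_subspace_def intro: subspace_diff)
  then have "r = 0"
  proof (rule orthogonal_residual_sums_eq_0)
    show "inner r (x - P2 x) = 0" if "x \<in> V1" for x
      using orth_proj_orthogonal[OF W residuals_in_closure_residual_sums(1)[OF that]]
      by (simp add: r_def)
    show "inner r (y - P1 y) = 0" if "y \<in> V2" for y
      using orth_proj_orthogonal[OF W residuals_in_closure_residual_sums(2)[OF that]]
      by (simp add: r_def)
  qed
  then show ?thesis using orth_proj_in[OF W, of z] by (simp add: r_def)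
qed

lemma norm_square_le_qform_inv_orth_proj:
  assumes z: "z \<in> S12" "z \<in> V0\<^sup>\<bottom>"
  shows "(norm z)\<^sup>2 \<le> qform_inv \<epsilon> (norm (P1 z)) (norm (P2 z))"
proof (rule norm_square_le_qform_inv_closure_sums[OF angle_nonneg angle_less_1 norm_ge_zero norm_ge_zero])
  show "z \<in> closure {a + b | a b. a \<in> V1 \<inter> V0\<^sup>\<bottom> \<and> b \<in> V2 \<inter> V0\<^sup>\<bottom>}"
    using in_closure_sums_orthogonal_comp[OF z] .
  show "- (\<epsilon> * norm a * norm b) \<le> inner a b" if "a \<in> V1 \<inter> V0\<^sup>\<bottom>" "b \<in> V2 \<inter> V0\<^sup>\<bottom>" for a b
    using that abs_inner_le_cos_angle[OF subspace1 subspace2, of a b] by auto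
  show "inner z a \<le> norm (P1 z) * norm a" if "a \<in> V1 \<inter> V0\<^sup>\<bottom>" for a
    using that inner_orth_proj_left[OF closed1, of a z] norm_cauchy_schwarz[of "P1 z" a] by simp
  show "inner z b \<le> norm (P2 z) * norm b" if "b \<in> V2 \<inter> V0\<^sup>\<bottom>" for b
    using that inner_orth_proj_left[OF closed2, of b z] norm_cauchy_schwarz[of "P2 z" b] by simp
qed

lemma norm_square_le_qform_inv_residuals:
  assumes z: "z \<in> S12" "z \<in> V0\<^sup>\<bottom>"
  shows "(norm z)\<^sup>2 \<le> qform_inv \<epsilon> (norm (z - P1 z)) (norm (z - P2 z))"
proof -
  have "(norm z)\<^sup>2 \<le> qform_inv \<epsilon> (norm (z - P2 z)) (norm (z - P1 z))"
  proof (rule norm_square_le_qform_inv_closure_sums[OF angle_nonneg angle_less_1 norm_ge_zero norm_ge_zero])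
    show "z \<in> closure residual_sums"
      using in_closure_residual_sums[OF z] .
    show "- (\<epsilon> * norm a * norm b) \<le> inner a b"
      if "a \<in> (\<lambda>x. x - P2 x) ` V1" "b \<in> (\<lambda>y. y - P1 y) ` V2" for a b
    proof -
      from that obtain x y where "a = x - P2 x" "y \<in> V2" "b = y - P1 y" by blast
      with abs_inner_orth_proj_residual_le_cos_angle[OF closed1 closed2 angle_nonneg
          orth_proj_residual_in_orthogonal_comp[OF closed2, of x]]
      have "\<bar>inner a b\<bar> \<le> \<epsilon> * norm a * norm b" by simp
      then show ?thesis by linarith
    qed
    show "inner z a \<le> norm (z - P2 z) * norm a" if "a \<in> (\<lambda>x. x - P2 x) ` V1" for a
    proof -
      from that obtain x where "a = x - P2 x" by blast
      then show ?thesis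
        using inner_orth_proj_residual[OF closed2, of z x] norm_cauchy_schwarz[of "z - P2 z" a] by simp
    qed
    show "inner z b \<le> norm (z - P1 z) * norm b" if "b \<in> (\<lambda>y. y - P1 y) ` V2" for b
    proof -
      from that obtain y where "b = y - P1 y" by blast
      then show ?thesis
        using inner_orth_proj_residual[OF closed1, of z y] norm_cauchy_schwarz[of "z - P1 z" b] by simp
    qed
  qed
  then show ?thesis
    using angle_nonneg angle_less_1 by (simp add: qform_inv_commute)
qed

lemma orth_proj_sums_residual:
  "P12 (w - P0 w) \<in> S12" "P12 (w - P0 w) \<in> V0\<^sup>\<bottom>"
  using orth_proj_in[OF closed12]
    orth_proj_in_orthogonal_comp[OF closed12 _ orth_proj_residual_in_orthogonal_comp[OF closed0]]
    subset_S12
  by auto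

lemma norm_residual_split:
  assumes V: "closed_subspace V" "V \<subseteq> S12"
  shows "(norm (u - orth_proj V u))\<^sup>2 = (norm (P12 u - orth_proj V (P12 u)))\<^sup>2 + (norm (u - P12 u))\<^sup>2"
proof -
  have eq: "u - orth_proj V u = (P12 u - orth_proj V (P12 u)) + (u - P12 u)"
    using orth_proj_orth_proj_subset[OF closed12 V] by simp
  have "orthogonal (P12 u - orth_proj V (P12 u)) (u - P12 u)"
  proof -
    have "P12 u - orth_proj V (P12 u) \<in> S12"
      using closed12 orth_proj_in[OF closed12] orth_proj_in[OF V(1)] V(2)
      by (blast intro: subspace_diff[of S12] closed_subspace_def[THEN iffD1, THEN conjunct1])
    then show ?thesis
      unfolding orthogonal_def by (subst inner_commute) (rule orth_proj_orthogonal[OF closed12])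
  qed
  then show ?thesis unfolding eq by (rule norm_add_Pythagorean)
qed

lemma norm_orth_proj_split:
  assumes V: "closed_subspace V" "V0 \<subseteq> V"
  shows "(norm (orth_proj V w))\<^sup>2 = (norm (orth_proj V (w - P0 w)))\<^sup>2 + (norm (P0 w))\<^sup>2"
proof -
  have "P0 w \<in> V" using orth_proj_in[OF closed0, of w] V(2) by blast
  then have eq: "orth_proj V w = orth_proj V (w - P0 w) + P0 w"
    by (simp add: orth_proj_diff[OF V(1)] orth_proj_id[OF V(1)])
  have "orth_proj V (w - P0 w) \<in> V0\<^sup>\<bottom>"
    by (rule orth_proj_in_orthogonal_comp[OF V orth_proj_residual_in_orthogonal_comp[OF closed0]])
  then have "orthogonal (orth_proj V (w - P0 w)) (P0 w)"
    using orth_proj_in[OF closed0, of w] unfolding orthogonal_comp_def by (simp add: orthogonal_commute)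
  then show ?thesis unfolding eq by (rule norm_add_Pythagorean)
qed

theorem infdist_square_le_qform_inv:
  "(infdist w V0)\<^sup>2 \<le> qform_inv \<epsilon> (infdist w V1) (infdist w V2)"
proof -
  define u where "u = w - P0 w"
  define z where "z = P12 u"
  have z: "z \<in> S12" "z \<in> V0\<^sup>\<bottom>" using orth_proj_sums_residual by (simp_all add: z_def u_def)
  have residual: "u - orth_proj V u = w - orth_proj V w" if "closed_subspace V" "V0 \<subseteq> V" for V
  proof -
    have "P0 w \<in> V" using orth_proj_in[OF closed0, of w] that(2) by blast
    then show ?thesis by (simp add: u_def orth_proj_diff[OF that(1)] orth_proj_id[OF that(1)])
  qed
  have split: "(norm (w - orth_proj V w))\<^sup>2 = (norm (z - orth_proj V z))\<^sup>2 + (norm (u - z))\<^sup>2"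
    if "closed_subspace V" "V0 \<subseteq> V" "V \<subseteq> S12" for V
    using norm_residual_split[OF that(1,3), of u] residual[OF that(1,2)] by (simp add: z_def)
  have "(norm u)\<^sup>2 = (norm z)\<^sup>2 + (norm (u - z))\<^sup>2"
    using norm_orth_proj_pythagoras[OF closed12, of u] by (simp add: z_def)
  also have "\<dots> \<le> qform_inv \<epsilon> (norm (z - P1 z)) (norm (z - P2 z)) + (norm (u - z))\<^sup>2"
    using norm_square_le_qform_inv_residuals[OF z] by simp
  also have "\<dots> \<le> qform_inv \<epsilon> (norm (w - P1 w)) (norm (w - P2 w))"
    by (rule qform_inv_add_le[OF angle_nonneg angle_less_1 norm_ge_zero norm_ge_zero
          norm_ge_zero norm_ge_zero zero_le_power2
          split[OF closed1 _ subset_S12(1)] split[OF closed2 _ subset_S12(2)]]) auto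
  finally show ?thesis
    unfolding infdist_eq_norm_orth_proj_residual[OF closed0] infdist_eq_norm_orth_proj_residual[OF closed1]
      infdist_eq_norm_orth_proj_residual[OF closed2] u_def .
qed

theorem norm_orth_proj_sums_square_le_qform_inv:
  "(norm (P12 w))\<^sup>2 \<le> qform_inv \<epsilon> (norm (P1 w)) (norm (P2 w))"
proof -
  define z where "z = P12 (w - P0 w)"
  have z: "z \<in> S12" "z \<in> V0\<^sup>\<bottom>" using orth_proj_sums_residual by (simp_all add: z_def)
  have split: "(norm (orth_proj V w))\<^sup>2 = (norm (orth_proj V z))\<^sup>2 + (norm (P0 w))\<^sup>2"
    if "closed_subspace V" "V0 \<subseteq> V" "V \<subseteq> S12" for V
    using norm_orth_proj_split[OF that(1,2), of w] orth_proj_orth_proj_subset[OF closed12 that(1,3)]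
    by (simp add: z_def)
  have "V0 \<subseteq> S12" using subset_S12 by blast
  then have "(norm (P12 w))\<^sup>2 = (norm z)\<^sup>2 + (norm (P0 w))\<^sup>2"
    using norm_orth_proj_split[OF closed12, of w] orth_proj_id[OF closed12 z(1)] by (simp add: z_def)
  also have "\<dots> \<le> qform_inv \<epsilon> (norm (P1 z)) (norm (P2 z)) + (norm (P0 w))\<^sup>2"
    using norm_square_le_qform_inv_orth_proj[OF z] by simp
  also have "\<dots> \<le> qform_inv \<epsilon> (norm (P1 w)) (norm (P2 w))"
    by (rule qform_inv_add_le[OF angle_nonneg angle_less_1 norm_ge_zero norm_ge_zero
          norm_ge_zero norm_ge_zero zero_le_power2
          split[OF closed1 _ subset_S12(1)] split[OF closed2 _ subset_S12(2)]]) auto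
  finally show ?thesis .
qed

end

theorem lemma3p26:
  fixes V1 V2 :: "'a::{real_inner, complete_space} set"
  assumes "closed_subspace V1" and "closed_subspace V2"
    and "\<not> V1 \<subseteq> V2" and "\<not> V2 \<subseteq> V1"
    and "cos_angle V1 V2 < 1"
  shows "\<forall>w::'a.
      (infdist w (V1 \<inter> V2))\<^sup>2 \<le> qform_inv (cos_angle V1 V2) (infdist w V1) (infdist w V2) \<and>
      (norm (orth_proj (closure {x + y | x y. x \<in> V1 \<and> y \<in> V2}) w))\<^sup>2
        \<le> qform_inv (cos_angle V1 V2) (norm (orth_proj V1 w)) (norm (orth_proj V2 w))"
proof -
  interpret two_closed_subspaces V1 V2
    using assms cos_angle_nonneg by unfold_locales auto
  show ?thesis
    using infdist_square_le_qform_inv norm_orth_proj_sums_square_le_qform_inv by blast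
qed

end
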